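(* Let $\mathcal{F}$ be a flag of type $(ms_1,\dots,ms_r)$ on $\mathbb{F}_{q^n}$ with best friend $\mathbb{F}_{q^m}$, and let $\beta\in\mathbb{F}_{q^n}^\ast\setminus\mathbb{F}_{q^m}^\ast$. If $d_f(\mathrm{Orb}_\beta(\mathcal{F}))=2m$, then $\gcd(s_j,n/m)\neq 1$ for at least $r-1$ indices $j\in\{1,\dots,r\}$.
   Context: $q$ is a prime power and $\mathbb{F}_{q^n}$ is regarded as an $n$-dimensional $\mathbb{F}_q$-vector space; all subspaces are $\mathbb{F}_q$-subspaces. The subspace distance is $d_S(\mathcal{U},\mathcal{V})=\dim(\mathcal{U}+\mathcal{V})-\dim(\mathcal{U}\cap\mathcal{V})$. A flag $\mathcal{F}=(\mathcal{F}_1,\dots,\mathcal{F}_r)$ on $\mathbb{F}_{q^n}$ is a sequence of subspaces $\{0\}\subsetneq\mathcal{F}_1\subsetneq\cdots\subsetneq\mathcal{F}_r\subsetneq\mathbb{F}_{q^n}$; its type is $(\dim\mathcal{F}_1,\dots,\dim\mathcal{F}_r)$. The flag distance is $d_f(\mathcal{F},\mathcal{F}')=\sum_i d_S(\mathcal{F}_i,\mathcal{F}'_i)$; the minimum distance of a flag code is the minimum flag distance between distinct codewords ($0$ if the code has one element). For $\beta\in\mathbb{F}_{q^n}^\ast$, $\mathcal{F}\beta=(\mathcal{F}_1\beta,\dots,\mathcal{F}_r\beta)$ and $\mathrm{Orb}_\beta(\mathcal{F})=\{\mathcal{F}\beta^j: j\ge 0\}$. A subfield $\mathbb{F}_{q^m}$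 is a friend of a subspace $\mathcal{U}$ if $\mathcal{U}$ is an $\mathbb{F}_{q^m}$-vector space; the best friend is the largest friend. A friend of a flag is a common friend of all its subspaces; the best friend of a flag is its largest friend. *)

theory Defs
  imports "HOL-Algebra.Embedded_Algebras"
begin

text \<open>Ambient field R (playing the role of F_{q^n}), with a subfield K (playing F_q).
  All subspaces are K-subspaces of carrier R, i.e. subalgebras in the sense of
  HOL-Algebra; dimension is the library's ring.dim.\<close>

definition subspace_dist :: "('a, 'b) ring_scheme \<Rightarrow> 'a set \<Rightarrow> 'a set \<Rightarrow> 'a set \<Rightarrow> nat" where
  "subspace_dist R K U V =
     ring.dim R K (U <+>\<^bsub>R\<^esub> V) - ring.dim R K (U \<inter> V)"

text \<open>A flag (F_1,...,F_r) is represented by the list F with F!0 = F_1.\<close>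
definition is_flag :: "('a, 'b) ring_scheme \<Rightarrow> 'a set \<Rightarrow> 'a set list \<Rightarrow> bool" where
  "is_flag R K F \<longleftrightarrow> F \<noteq> [] \<and>
     (\<forall>i < length F. subalgebra K (F ! i) R) \<and>
     {\<zero>\<^bsub>R\<^esub>} \<subset> F ! 0 \<and>
     (\<forall>i. Suc i < length F \<longrightarrow> F ! i \<subset> F ! Suc i) \<and>
     last F \<subset> carrier R"

definition flag_dist :: "('a, 'b) ring_scheme \<Rightarrow> 'a set \<Rightarrow> 'a set list \<Rightarrow> 'a set list \<Rightarrow> nat" where
  "flag_dist R K F F' = (\<Sum>i < length F. subspace_dist R K (F ! i) (F' ! i))"

definition min_flag_dist :: "('a, 'b) ring_scheme \<Rightarrow> 'a set \<Rightarrow> 'a set list set \<Rightarrow> nat" where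
  "min_flag_dist R K C =
     (if card C \<le> 1 then 0
      else Min {flag_dist R K F F' | F F'. F \<in> C \<and> F' \<in> C \<and> F \<noteq> F'})"

definition flag_mult :: "('a, 'b) ring_scheme \<Rightarrow> 'a set list \<Rightarrow> 'a \<Rightarrow> 'a set list" where
  "flag_mult R F \<beta> = map (\<lambda>U. (\<lambda>x. x \<otimes>\<^bsub>R\<^esub> \<beta>) ` U) F"

definition flag_orbit :: "('a, 'b) ring_scheme \<Rightarrow> 'a set list \<Rightarrow> 'a \<Rightarrow> 'a set list set" where
  "flag_orbit R F \<beta> = {flag_mult R F (\<beta> [^]\<^bsub>R\<^esub> (j::nat)) | j. True}"

definition is_friend :: "('a, 'b) ring_scheme \<Rightarrow> 'a set \<Rightarrow> 'a set \<Rightarrow> 'a set \<Rightarrow> bool" where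
  "is_friend R K L U \<longleftrightarrow> subfield L R \<and> K \<subseteq> L \<and>
     (\<forall>l \<in> L. \<forall>u \<in> U. l \<otimes>\<^bsub>R\<^esub> u \<in> U)"

definition is_flag_friend :: "('a, 'b) ring_scheme \<Rightarrow> 'a set \<Rightarrow> 'a set \<Rightarrow> 'a set list \<Rightarrow> bool" where
  "is_flag_friend R K L F \<longleftrightarrow> subfield L R \<and> K \<subseteq> L \<and> (\<forall>U \<in> set F. is_friend R K L U)"

definition is_flag_best_friend :: "('a, 'b) ring_scheme \<Rightarrow> 'a set \<Rightarrow> 'a set \<Rightarrow> 'a set list \<Rightarrow> bool" where
  "is_flag_best_friend R K L F \<longleftrightarrow> is_flag_friend R K L F \<and>
     (\<forall>L'. is_flag_friend R K L' F \<longrightarrow> L' \<subseteq> L)"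

end

theory Submission
  imports Defs
begin

text \<open>Let \<open>L = GF(q\<^sup>m)\<close>. Every subspace of the flag, and every shift of it by a power of \<open>\<beta>\<close>,
  is an \<open>L\<close>-space, so two distinct such subspaces of equal size are at distance at least \<open>2m\<close>.
  Hence two codewords \<open>F\<beta>\<^sup>a \<noteq> F\<beta>\<^sup>b\<close> at distance \<open>2m\<close> differ in exactly one component, and in
  every other component \<open>F\<^sub>j\<beta>\<^sup>a = F\<^sub>j\<beta>\<^sup>b\<close>, i.e. \<open>c = \<beta>\<^sup>b\<^sup>-\<^sup>a\<close> maps \<open>F\<^sub>j\<close> into itself. Now \<open>c \<notin> L\<close>, for
  otherwise the two codewords would coincide. So the multiplicative stabiliser \<open>M\<close> of \<open>F\<^sub>j\<close> is
  a subfield properly containing \<open>L\<close>, and \<open>[M : L] > 1\<close> divides both \<open>s\<^sub>j = dim\<^sub>L F\<^sub>j\<close> and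
  \<open>n / m = [GF(q\<^sup>n) : L]\<close>.\<close>

lemma sum_eq_imp_unique_large_term:
  fixes f :: "'i \<Rightarrow> nat"
  assumes "finite I" and "sum f I = d" and "0 < d"
    and "\<And>i. i \<in> I \<Longrightarrow> P i \<Longrightarrow> d \<le> f i"
    and "i \<in> I" and "k \<in> I" and "P i" and "P k"
  shows "i = k"
proof (rule ccontr)
  assume "i \<noteq> k"
  hence "f i + f k \<le> d" using sum_mono2[OF assms(1), of "{i, k}" f] assms(2,5,6) by simp
  moreover have "d \<le> f i" and "d \<le> f k" using assms(4-8) by blast+
  ultimately show False using assms(3) by linarith
qed

lemma card_all_but_one_index:
  assumes "\<And>k. k < r \<Longrightarrow> k \<noteq> i \<Longrightarrow> Q k"
  shows "r - 1 \<le> card {j \<in> {1..r}. Q (j - 1)}"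
proof -
  have "{1..r} - {Suc i} \<subseteq> {j \<in> {1..r}. Q (j - 1)}" using assms by force
  hence "card ({1..r} - {Suc i}) \<le> card {j \<in> {1..r}. Q (j - 1)}" by (rule card_mono[rotated]) auto
  moreover have "r - 1 \<le> card ({1..r} - {Suc i})"
    by (cases "Suc i \<in> {1..r}") (auto simp: card_Diff_singleton_if)
  ultimately show ?thesis by simp
qed

lemma min_flag_dist_attained:
  assumes "finite C" and "0 < min_flag_dist R K C"
  shows "\<exists>X \<in> C. \<exists>Y \<in> C. X \<noteq> Y \<and> flag_dist R K X Y = min_flag_dist R K C"
proof -
  let ?D = "{flag_dist R K X Y | X Y. X \<in> C \<and> Y \<in> C \<and> X \<noteq> Y}"
  have C: "\<not> card C \<le> 1"
    using assms(2) unfolding min_flag_dist_def by (cases "card C \<le> 1") simp_all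
  hence min: "min_flag_dist R K C = Min ?D" unfolding min_flag_dist_def by simp
  obtain X0 Y0 where "X0 \<in> C" "Y0 \<in> C" "X0 \<noteq> Y0"
    using C card_le_Suc0_iff_eq[OF assms(1)] by auto
  hence "?D \<noteq> {}" by blast
  moreover have "?D \<subseteq> (\<lambda>(X, Y). flag_dist R K X Y) ` (C \<times> C)" by blast
  hence "finite ?D" using assms(1) finite_subset by blast
  ultimately have "min_flag_dist R K C \<in> ?D" unfolding min by (rule Min_in[rotated])
  then obtain X Y where "X \<in> C" "Y \<in> C" "X \<noteq> Y" "flag_dist R K X Y = min_flag_dist R K C"
    by auto
  thus ?thesis by blast
qed

context ring
begin

lemma subalgebra_restrict_scalars:
  assumes "subalgebra L W R" and "K \<subseteq> L" shows "subalgebra K W R"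
  using assms unfolding subalgebra_def subalgebra_axioms_def by blast

lemma subfield_subalgebra_self:
  assumes "subfield M R" shows "subalgebra M M R"
  using subring.axioms(1)[OF subfieldE(1)[OF assms]] subringE(6)[OF subfieldE(1)[OF assms]]
  unfolding subalgebra_def subalgebra_axioms_def by auto

lemma finite_dimension_carrier:
  assumes "subfield K R" and "finite (carrier R)" shows "finite_dimension K (carrier R)"
proof -
  obtain Us where Us: "set Us = carrier R" using finite_list[OF assms(2)] by blast
  have "Span K Us = carrier R"
    using Span_in_carrier[of K Us] subfieldE(3)[OF assms(1)] Span_base_incl[OF assms(1)] Us
    by blast
  thus ?thesis using Span_finite_dimension[OF assms(1)] Us by force
qed

lemma finite_dimension_subalgebra:
  assumes "subfield K R" and "finite (carrier R)" and "subalgebra K W R"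
  shows "finite_dimension K W"
  using subalbegra_incl_imp_finite_dimension[OF assms(1) finite_dimension_carrier[OF assms(1,2)]
      assms(3) subalgebra_in_carrier[OF assms(3)]] .

lemma dim_tower:
  assumes "subfield K R" and "subfield M R" and "K \<subseteq> M" and "finite (carrier R)"
    and "subalgebra M W R"
  shows "dim K W = dim K M * dim M W"
proof -
  have "finite_dimension K M"
    using finite_dimension_subalgebra assms subalgebra_restrict_scalars subfield_subalgebra_self
    by blast
  moreover have "finite_dimension M W" using finite_dimension_subalgebra assms by blast
  ultimately show ?thesis using telescopic_base_dim(2)[OF assms(1,2)] unfolding over_def by blast
qed

lemma dim_subfield_pos:
  assumes "subfield K R" and "subfield L R" and "K \<subseteq> L" and "finite (carrier R)"
  shows "0 < dim K L"
proof (rule ccontr)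
  assume "\<not> 0 < dim K L"
  moreover have "dimension (dim K L) K L"
    using finite_dimensionE[OF assms(1) finite_dimension_subalgebra[OF assms(1,4)]]
      subalgebra_restrict_scalars[OF subfield_subalgebra_self[OF assms(2)] assms(3)]
    unfolding over_def by blast
  ultimately have "L = {\<zero>}" using dimension_zero[OF assms(1)] by simp
  thus False using subringE(3)[OF subfieldE(1)[OF assms(2)]] subfieldE(6)[OF assms(2)] by simp
qed

lemma dim_strict_mono:
  assumes "subfield K R" and "finite (carrier R)"
    and "subalgebra K V R" and "subalgebra K E R" and "V \<subset> E"
  shows "dim K V < dim K E"
proof -
  have dV: "dimension (dim K V) K V" and dE: "dimension (dim K E) K E"
    using finite_dimensionE[OF assms(1)] finite_dimension_subalgebra[OF assms(1,2)] assms(3,4)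
    unfolding over_def by blast+
  obtain Us where Us: "independent K Us" "length Us = dim K V" "Span K Us = V" "set Us \<subseteq> V"
    using exists_base[OF assms(1) dV] Span_base_incl[OF assms(1)] by blast
  have sub: "set Us \<subseteq> E" using Us(4) assms(5) by blast
  have "length Us \<noteq> dim K E"
  proof
    assume "length Us = dim K E"
    hence "Span K Us = E" using independent_length_eq_dimension[OF assms(1) dE Us(1) sub] by simp
    thus False using Us(3) assms(5) by blast
  qed
  thus ?thesis using independent_length_le_dimension[OF assms(1) dE Us(1) sub] Us(2) by simp
qed

lemma subalgebra_set_add:
  assumes "subalgebra L U R" and "subalgebra L V R" and "L \<subseteq> carrier R"
  shows "subalgebra L (U <+>\<^bsub>R\<^esub> V) R"
proof -
  have "subgroup (U <+>\<^bsub>R\<^esub> V) (add_monoid R)"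
    using add_additive_subgroups[of U V] assms(1,2)
    unfolding subalgebra_def additive_subgroup_def by blast
  moreover have "l \<otimes> x \<in> U <+>\<^bsub>R\<^esub> V" if l: "l \<in> L" and x: "x \<in> U <+>\<^bsub>R\<^esub> V" for l x
  proof -
    obtain u v where uv: "u \<in> U" "v \<in> V" "x = u \<oplus> v"
      using x by (auto simp: set_add_def')
    have "u \<in> carrier R" "v \<in> carrier R" "l \<in> carrier R"
      using uv(1,2) l assms subalgebra_in_carrier by blast+
    hence "l \<otimes> x = l \<otimes> u \<oplus> l \<otimes> v" using uv(3) by (simp add: r_distr)
    moreover have "l \<otimes> u \<in> U" "l \<otimes> v \<in> V"
      using uv l subalgebra.smult_closed[OF assms(1)] subalgebra.smult_closed[OF assms(2)] by auto
    ultimately show ?thesis unfolding set_add_def' by blast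
  qed
  ultimately show ?thesis unfolding subalgebra_def subalgebra_axioms_def by blast
qed

lemma subset_set_add_left:
  assumes "subgroup V (add_monoid R)" and "U \<subseteq> carrier R" shows "U \<subseteq> U <+>\<^bsub>R\<^esub> V"
proof
  fix u assume u: "u \<in> U"
  hence "u = u \<oplus> \<zero>" using assms(2) by (simp add: subset_iff)
  moreover have "\<zero> \<in> V" using subgroup.one_closed[OF assms(1)] by simp
  ultimately show "u \<in> U <+>\<^bsub>R\<^esub> V" using u unfolding set_add_def' by blast
qed

lemma subset_set_add_right:
  assumes "subgroup U (add_monoid R)" and "V \<subseteq> carrier R" shows "V \<subseteq> U <+>\<^bsub>R\<^esub> V"
proof
  fix v assume v: "v \<in> V"
  hence "v = \<zero> \<oplus> v" using assms(2) by (simp add: subset_iff)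
  moreover have "\<zero> \<in> U" using subgroup.one_closed[OF assms(1)] by simp
  ultimately show "v \<in> U <+>\<^bsub>R\<^esub> V" using v unfolding set_add_def' by blast
qed

lemma subalgebra_image_mult:
  assumes "subalgebra L U R" and "L \<subseteq> carrier R" and "c \<in> carrier R"
  shows "subalgebra L ((\<lambda>x. x \<otimes> c) ` U) R"
proof -
  have U: "U \<subseteq> carrier R" using subalgebra_in_carrier[OF assms(1)] .
  interpret U: subalgebra L U R by fact
  have "subgroup ((\<lambda>x. x \<otimes> c) ` U) (add_monoid R)"
  proof (rule add.subgroupI)
    show "(\<lambda>x. x \<otimes> c) ` U \<subseteq> carrier R" and "(\<lambda>x. x \<otimes> c) ` U \<noteq> {}"
      using U assms(3) U.one_closed by auto
  next
    fix a assume "a \<in> (\<lambda>x. x \<otimes> c) ` U"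
    then obtain x where x: "x \<in> U" "a = x \<otimes> c" by blast
    hence "\<ominus> a = (\<ominus> x) \<otimes> c" using U assms(3) by (simp add: l_minus subset_iff)
    moreover have "\<ominus> x \<in> U" using U.m_inv_closed[OF x(1)] by (simp add: a_inv_def)
    ultimately show "\<ominus> a \<in> (\<lambda>x. x \<otimes> c) ` U" by blast
  next
    fix a b assume "a \<in> (\<lambda>x. x \<otimes> c) ` U" and "b \<in> (\<lambda>x. x \<otimes> c) ` U"
    then obtain x y where xy: "x \<in> U" "y \<in> U" "a = x \<otimes> c" "b = y \<otimes> c" by blast
    hence "a \<oplus> b = (x \<oplus> y) \<otimes> c" using U assms(3) by (simp add: l_distr subset_iff)
    moreover have "x \<oplus> y \<in> U" using U.m_closed[OF xy(1,2)] by simp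
    ultimately show "a \<oplus> b \<in> (\<lambda>x. x \<otimes> c) ` U" by blast
  qed
  moreover have "l \<otimes> (x \<otimes> c) = (l \<otimes> x) \<otimes> c" if "l \<in> L" and "x \<in> U" for l x
    using that U assms(2,3) by (simp add: m_assoc subset_iff)
  hence "l \<otimes> w \<in> (\<lambda>x. x \<otimes> c) ` U" if "l \<in> L" and "w \<in> (\<lambda>x. x \<otimes> c) ` U" for l w
    using that U.smult_closed by auto
  ultimately show ?thesis unfolding subalgebra_def subalgebra_axioms_def by blast
qed

lemma subspace_dist_ge_twice_dim:
  assumes "subfield K R" and "subfield L R" and "K \<subseteq> L" and "finite (carrier R)"
    and "subalgebra L U R" and "subalgebra L V R" and "card U = card V" and "U \<noteq> V"
  shows "2 * dim K L \<le> subspace_dist R K U V"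
proof -
  have U: "U \<subseteq> carrier R" and V: "V \<subseteq> carrier R"
    using assms(5,6) subalgebra_in_carrier by blast+
  have "finite U" "finite V" using U V assms(4) finite_subset by auto
  hence "\<not> U \<subset> V" and "\<not> V \<subset> U"
    using psubset_card_mono[of V U] psubset_card_mono[of U V] assms(7) by auto
  hence "U \<inter> V \<subset> U" and "U \<subset> U <+>\<^bsub>R\<^esub> V"
    using subset_set_add_left[OF subalgebra.axioms(1)[OF assms(6)] U]
      subset_set_add_right[OF subalgebra.axioms(1)[OF assms(5)] V] assms(8) by auto
  moreover have UV: "subalgebra L (U \<inter> V) R" "subalgebra L (U <+>\<^bsub>R\<^esub> V) R"
    using subalgebra_inter[OF assms(5,6)] subalgebra_set_add[OF assms(5,6) subfieldE(3)[OF assms(2)]]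
    by auto
  ultimately have "dim K (U \<inter> V) < dim K U" and "dim K U < dim K (U <+>\<^bsub>R\<^esub> V)"
    using dim_strict_mono[OF assms(1,4)] subalgebra_restrict_scalars[OF _ assms(3)] assms(5)
    by (meson UV)+
  moreover have tower: "dim K W = dim K L * dim L W" if "subalgebra L W R" for W
    using dim_tower[OF assms(1-4) that] .
  ultimately have "dim L (U \<inter> V) + 2 \<le> dim L (U <+>\<^bsub>R\<^esub> V)"
    using UV assms(5) by auto
  hence "dim K L * (dim L (U \<inter> V) + 2) \<le> dim K L * dim L (U <+>\<^bsub>R\<^esub> V)"
    by (rule mult_le_mono2)
  thus ?thesis using tower[OF UV(1)] tower[OF UV(2)] unfolding subspace_dist_def by simp
qed

definition mult_stabilizer :: "'a set \<Rightarrow> 'a set" where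
  "mult_stabilizer U = {x \<in> carrier R. \<forall>u \<in> U. x \<otimes> u \<in> U}"

lemma subring_mult_stabilizer:
  assumes "subgroup U (add_monoid R)" shows "subring (mult_stabilizer U) R"
proof -
  interpret U: subgroup U "add_monoid R" by fact
  have U: "U \<subseteq> carrier R" using U.subset by simp
  show ?thesis
  proof (rule subringI)
    show "mult_stabilizer U \<subseteq> carrier R" and "\<one> \<in> mult_stabilizer U"
      using U by (auto simp: mult_stabilizer_def)
  next
    fix h assume h: "h \<in> mult_stabilizer U"
    have "\<ominus> h \<otimes> u \<in> U" if u: "u \<in> U" for u
    proof -
      have "\<ominus> h \<otimes> u = \<ominus> (h \<otimes> u)" using h u U by (simp add: mult_stabilizer_def l_minus subset_iff)
      thus ?thesis using h u U.m_inv_closed by (simp add: mult_stabilizer_def a_inv_def)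
    qed
    thus "\<ominus> h \<in> mult_stabilizer U" using h by (simp add: mult_stabilizer_def)
  next
    fix h1 h2 assume h: "h1 \<in> mult_stabilizer U" "h2 \<in> mult_stabilizer U"
    have "h1 \<otimes> h2 \<otimes> u \<in> U" and "(h1 \<oplus> h2) \<otimes> u \<in> U" if u: "u \<in> U" for u
    proof -
      have "h1 \<in> carrier R" "h2 \<in> carrier R" "u \<in> carrier R"
        using h u U by (auto simp: mult_stabilizer_def)
      hence "h1 \<otimes> h2 \<otimes> u = h1 \<otimes> (h2 \<otimes> u)" and "(h1 \<oplus> h2) \<otimes> u = h1 \<otimes> u \<oplus> h2 \<otimes> u"
        by (simp_all add: m_assoc l_distr)
      thus "h1 \<otimes> h2 \<otimes> u \<in> U" and "(h1 \<oplus> h2) \<otimes> u \<in> U"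
        using h u U.m_closed by (simp_all add: mult_stabilizer_def)
    qed
    thus "h1 \<otimes> h2 \<in> mult_stabilizer U" and "h1 \<oplus> h2 \<in> mult_stabilizer U"
      using h by (simp_all add: mult_stabilizer_def)
  qed
qed

end

context field
begin

lemma nat_pow_nonzero:
  assumes "\<beta> \<in> carrier R - {\<zero>}" shows "\<beta> [^] (j::nat) \<in> carrier R - {\<zero>}"
  using Units_pow_closed[of \<beta> j] assms field_Units by auto

lemma card_image_mult:
  assumes "c \<in> carrier R - {\<zero>}" and "U \<subseteq> carrier R"
  shows "card ((\<lambda>x. x \<otimes> c) ` U) = card U"
  using assms m_rcancel by (intro card_image) (auto simp: inj_on_def subset_iff)

lemma image_mult_unit:
  assumes "subalgebra L U R" and "subfield L R" and "c \<in> L - {\<zero>}"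
  shows "(\<lambda>x. x \<otimes> c) ` U = U"
proof -
  interpret U: subalgebra L U R by fact
  have U: "U \<subseteq> carrier R" using subalgebra_in_carrier[OF assms(1)] .
  have c: "c \<in> carrier R" "inv c \<in> L" "inv c \<in> carrier R" "inv c \<otimes> c = \<one>"
    using assms(3) subfieldE(3)[OF assms(2)] subfield_m_inv[OF assms(2)] by auto
  have "x \<otimes> c \<in> U" if "x \<in> U" for x
    using that U c assms(3) U.smult_closed m_comm by (metis DiffD1 subsetD)
  moreover have "x = (inv c \<otimes> x) \<otimes> c" if "x \<in> U" for x
    using that U c by (metis l_one m_assoc m_closed m_comm subsetD)
  hence "x \<in> (\<lambda>x. x \<otimes> c) ` U" if "x \<in> U" for x
    using that c(2) U.smult_closed by blast
  ultimately show ?thesis by blast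
qed

lemma flag_mult_friend_mult:
  assumes "\<forall>U \<in> set F. subalgebra L U R" and "subfield L R"
    and "c \<in> L - {\<zero>}" and "b \<in> carrier R"
  shows "flag_mult R F (c \<otimes> b) = flag_mult R F b"
  unfolding flag_mult_def
proof (rule map_cong[OF refl])
  fix U assume "U \<in> set F"
  hence U: "subalgebra L U R" using assms(1) by blast
  have "(\<lambda>x. x \<otimes> (c \<otimes> b)) ` U = (\<lambda>x. x \<otimes> b) ` ((\<lambda>x. x \<otimes> c) ` U)"
    unfolding image_image
  proof (rule image_cong[OF refl])
    fix x assume "x \<in> U"
    moreover have "c \<in> carrier R" using subfieldE(3)[OF assms(2)] assms(3) by blast
    ultimately show "x \<otimes> (c \<otimes> b) = x \<otimes> c \<otimes> b"
      using subalgebra_in_carrier[OF U] assms(4) by (simp add: m_assoc subset_iff)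
  qed
  also have "\<dots> = (\<lambda>x. x \<otimes> b) ` U" using image_mult_unit[OF U assms(2,3)] by simp
  finally show "(\<lambda>x. x \<otimes> (c \<otimes> b)) ` U = (\<lambda>x. x \<otimes> b) ` U" .
qed

lemma subspace_dist_image_mult_ge:
  assumes "finite (carrier R)" and "subfield K R" and "subfield L R" and "K \<subseteq> L"
    and "subalgebra L U R" and "b \<in> carrier R - {\<zero>}" and "b' \<in> carrier R - {\<zero>}"
    and "(\<lambda>x. x \<otimes> b) ` U \<noteq> (\<lambda>x. x \<otimes> b') ` U"
  shows "2 * dim K L \<le> subspace_dist R K ((\<lambda>x. x \<otimes> b) ` U) ((\<lambda>x. x \<otimes> b') ` U)"
proof (rule subspace_dist_ge_twice_dim[OF assms(2,3,4,1) _ _ _ assms(8)])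
  have L: "L \<subseteq> carrier R" using subfieldE(3)[OF assms(3)] .
  show "subalgebra L ((\<lambda>x. x \<otimes> b) ` U) R" and "subalgebra L ((\<lambda>x. x \<otimes> b') ` U) R"
    using subalgebra_image_mult[OF assms(5) L] assms(6,7) by simp_all
  show "card ((\<lambda>x. x \<otimes> b) ` U) = card ((\<lambda>x. x \<otimes> b') ` U)"
    using card_image_mult[OF _ subalgebra_in_carrier[OF assms(5)]] assms(6,7) by simp
qed

lemma orbit_codewords_at_distance_differ_in_one_component:
  assumes "finite (carrier R)" and "subfield K R" and "subfield L R" and "K \<subseteq> L"
    and "\<forall>U \<in> set F. subalgebra L U R" and "\<beta> \<in> carrier R - {\<zero>}"
    and "flag_dist R K (flag_mult R F (\<beta> [^] (a::nat))) (flag_mult R F (\<beta> [^] (b::nat)))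
           = 2 * dim K L"
  obtains i where "\<And>k. k < length F \<Longrightarrow> k \<noteq> i
                     \<Longrightarrow> flag_mult R F (\<beta> [^] a) ! k = flag_mult R F (\<beta> [^] b) ! k"
proof -
  let ?X = "flag_mult R F (\<beta> [^] a)" and ?Y = "flag_mult R F (\<beta> [^] b)"
  let ?t = "\<lambda>k. subspace_dist R K (?X ! k) (?Y ! k)"
  have large: "2 * dim K L \<le> ?t k" if "k \<in> {..<length F}" and "?X ! k \<noteq> ?Y ! k" for k
  proof -
    have "subalgebra L (F ! k) R" using assms(5) that(1) by simp
    thus ?thesis
      using subspace_dist_image_mult_ge[OF assms(1-4)] nat_pow_nonzero[OF assms(6)] that
      by (simp add: flag_mult_def)
  qed
  have "sum ?t {..<length F} = 2 * dim K L"
    using assms(7) by (simp add: flag_dist_def flag_mult_def)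
  moreover have "0 < 2 * dim K L" using dim_subfield_pos[OF assms(2-4,1)] by simp
  ultimately have "i = k"
    if "i < length F" "k < length F" "?X ! i \<noteq> ?Y ! i" "?X ! k \<noteq> ?Y ! k" for i k
    using sum_eq_imp_unique_large_term[OF finite_lessThan _ _ large] that by simp
  thus ?thesis using that by blast
qed

lemma finite_flag_orbit:
  assumes "finite (carrier R)" and "\<beta> \<in> carrier R"
  shows "finite (flag_orbit R F \<beta>)"
proof -
  have "flag_orbit R F \<beta> \<subseteq> flag_mult R F ` carrier R"
    using assms(2) unfolding flag_orbit_def by auto
  thus ?thesis using assms(1) finite_subset by blast
qed

lemma image_mult_pow_eq_imp_stabilizer:
  assumes "\<beta> \<in> carrier R - {\<zero>}" and "p \<le> q" and "U \<subseteq> carrier R"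
    and "(\<lambda>x. x \<otimes> \<beta> [^] p) ` U = (\<lambda>x. x \<otimes> \<beta> [^] (q::nat)) ` U"
  shows "\<beta> [^] (q - p) \<in> mult_stabilizer U"
  unfolding mult_stabilizer_def
proof (intro CollectI conjI ballI)
  have \<beta>: "\<beta> \<in> carrier R" using assms(1) by simp
  show c: "\<beta> [^] (q - p) \<in> carrier R" using \<beta> by simp
  fix u assume u: "u \<in> U"
  hence "u \<otimes> \<beta> [^] q \<in> (\<lambda>x. x \<otimes> \<beta> [^] p) ` U" using assms(4) by auto
  then obtain w where w: "w \<in> U" "u \<otimes> \<beta> [^] q = w \<otimes> \<beta> [^] p" by auto
  have u': "u \<in> carrier R" using u assms(3) by blast
  have "(\<beta> [^] (q - p) \<otimes> u) \<otimes> \<beta> [^] p = u \<otimes> (\<beta> [^] (q - p) \<otimes> \<beta> [^] p)"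
    using m_comm[OF c u'] m_assoc[OF u' c] \<beta> by simp
  also have "\<dots> = u \<otimes> \<beta> [^] q" using nat_pow_mult[OF \<beta>, of "q - p" p] assms(2) by simp
  finally have "(\<beta> [^] (q - p) \<otimes> u) \<otimes> \<beta> [^] p = w \<otimes> \<beta> [^] p" using w(2) by simp
  hence "\<beta> [^] (q - p) \<otimes> u = w"
    using m_rcancel nat_pow_nonzero[OF assms(1)] c u' w(1) assms(3) by (simp add: subset_iff)
  thus "\<beta> [^] (q - p) \<otimes> u \<in> U" using w(1) by simp
qed

lemma subfield_mult_stabilizer:
  assumes "finite (carrier R)" and "subgroup U (add_monoid R)"
  shows "subfield (mult_stabilizer U) R"
proof (rule subfieldI'[OF subring_mult_stabilizer[OF assms(2)]])
  have U: "U \<subseteq> carrier R" using add.subgroupE(1)[OF assms(2)] .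
  fix k assume k: "k \<in> mult_stabilizer U - {\<zero>}"
  have kc: "k \<in> carrier R" "k \<noteq> \<zero>" using k by (simp_all add: mult_stabilizer_def)
  hence ki: "inv k \<in> carrier R" "inv k \<otimes> k = \<one>" by (simp_all add: field_Units)
  have "(\<lambda>u. k \<otimes> u) ` U \<subseteq> U" using k by (auto simp: mult_stabilizer_def)
  moreover have "inj_on (\<lambda>u. k \<otimes> u) U"
    using kc U by (simp add: inj_on_def subset_iff m_lcancel)
  ultimately have onto: "(\<lambda>u. k \<otimes> u) ` U = U"
    by (rule endo_inj_surj[OF finite_subset[OF U assms(1)]])
  have "inv k \<otimes> u \<in> U" if "u \<in> U" for u
  proof -
    have "u \<in> (\<lambda>u. k \<otimes> u) ` U" using onto that by simp
    then obtain w where w: "w \<in> U" "u = k \<otimes> w" by blast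
    have "inv k \<otimes> (k \<otimes> w) = (inv k \<otimes> k) \<otimes> w"
      using kc(1) ki(1) w(1) U by (simp add: m_assoc subset_iff)
    hence "inv k \<otimes> u = w" using ki(2) w U by (simp add: subset_iff)
    thus ?thesis using w(1) by simp
  qed
  thus "inv k \<in> mult_stabilizer U" using ki(1) by (simp add: mult_stabilizer_def)
qed

lemma gcd_ne_one_if_stabilizer_not_in_friend:
  assumes "finite (carrier R)" and "subfield K R" and "subfield L R" and "K \<subseteq> L"
    and "subalgebra L U R" and "c \<in> mult_stabilizer U" and "c \<notin> L"
    and "dim K U = dim K L * s"
  shows "gcd s (dim K (carrier R) div dim K L) \<noteq> 1"
proof -
  define M where "M = mult_stabilizer U"
  have M: "subfield M R"
    using subfield_mult_stabilizer[OF assms(1) subalgebra.axioms(1)[OF assms(5)]] by (simp add: M_def)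
  have LM: "L \<subseteq> M"
    using subalgebra.smult_closed[OF assms(5)] subfieldE(3)[OF assms(3)]
    unfolding M_def mult_stabilizer_def by blast
  hence "L \<subset> M" and KM: "K \<subseteq> M" using assms(4,6,7) by (auto simp: M_def)
  moreover have LM_sub: "subalgebra L M R"
    using subalgebra_restrict_scalars[OF subfield_subalgebra_self[OF M] LM] .
  ultimately have "dim K L < dim K M"
    using dim_strict_mono[OF assms(2,1)] subalgebra_restrict_scalars[OF _ assms(4)]
      subfield_subalgebra_self[OF assms(3)] by blast
  moreover have tower_LM: "dim K M = dim K L * dim L M" using dim_tower[OF assms(2-4,1) LM_sub] .
  ultimately have t: "1 < dim L M" by simp
  have "subalgebra M U R"
    using subalgebra.axioms(1)[OF assms(5)]
    by (simp add: M_def mult_stabilizer_def subalgebra_def subalgebra_axioms_def)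
  hence "dim K U = dim K L * (dim L M * dim M U)"
    and "dim K (carrier R) = dim K L * (dim L M * dim M (carrier R))"
    using dim_tower[OF assms(2) M KM assms(1)] carrier_is_subalgebra[OF subfieldE(3)[OF M]] tower_LM
    by simp_all
  moreover have "0 < dim K L" using dim_subfield_pos[OF assms(2,3,4,1)] .
  ultimately have "s = dim L M * dim M U"
    and "dim K (carrier R) div dim K L = dim L M * dim M (carrier R)"
    using assms(8) by simp_all
  hence "gcd s (dim K (carrier R) div dim K L) = dim L M * gcd (dim M U) (dim M (carrier R))"
    by (simp add: gcd_mult_distrib_nat)
  thus ?thesis using t by simp
qed

lemma gcd_ne_one_if_orbit_component_eq:
  assumes "finite (carrier R)" and "subfield K R" and "subfield L R" and "K \<subseteq> L"
    and "\<forall>U \<in> set F. subalgebra L U R" and "\<beta> \<in> carrier R - {\<zero>}"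
    and "flag_mult R F (\<beta> [^] (a::nat)) \<noteq> flag_mult R F (\<beta> [^] (b::nat))"
    and "k < length F" and "flag_mult R F (\<beta> [^] a) ! k = flag_mult R F (\<beta> [^] b) ! k"
    and "dim K (F ! k) = dim K L * s"
  shows "gcd s (dim K (carrier R) div dim K L) \<noteq> 1"
proof -
  have Fk: "subalgebra L (F ! k) R" using assms(5) nth_mem[OF assms(8)] by blast
  have main: "gcd s (dim K (carrier R) div dim K L) \<noteq> 1"
    if le: "p \<le> q" and ne: "flag_mult R F (\<beta> [^] p) \<noteq> flag_mult R F (\<beta> [^] q)"
      and eq: "flag_mult R F (\<beta> [^] p) ! k = flag_mult R F (\<beta> [^] q) ! k" for p q :: nat
  proof -
    define c where "c = \<beta> [^] (q - p)"
    have "c \<in> mult_stabilizer (F ! k)"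
      using image_mult_pow_eq_imp_stabilizer[OF assms(6) le subalgebra_in_carrier[OF Fk]] eq assms(8)
      by (simp add: flag_mult_def c_def)
    moreover have "c \<notin> L"
    proof
      assume "c \<in> L"
      hence "flag_mult R F (c \<otimes> \<beta> [^] p) = flag_mult R F (\<beta> [^] p)"
        using flag_mult_friend_mult[OF assms(5,3)] nat_pow_nonzero[OF assms(6)] unfolding c_def
        by simp
      moreover have "c \<otimes> \<beta> [^] p = \<beta> [^] q"
        using nat_pow_mult[of \<beta> "q - p" p] assms(6) le unfolding c_def by simp
      ultimately show False using ne by simp
    qed
    ultimately show ?thesis
      by (rule gcd_ne_one_if_stabilizer_not_in_friend[OF assms(1-4) Fk _ _ assms(10)])
  qed
  consider "a \<le> b" | "b \<le> a" by linarith
  thus ?thesis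
  proof cases
    case 1
    show ?thesis using main[OF 1 assms(7,9)] .
  next
    case 2
    show ?thesis using main[OF 2 not_sym[OF assms(7)] assms(9)[symmetric]] .
  qed
qed

end

theorem mainTheorem2:
  fixes R :: "('a, 'b) ring_scheme" and K L :: "'a set"
    and F :: "'a set list" and s :: "nat list" and n m :: nat and \<beta> :: 'a
  assumes "field R" and "finite (carrier R)" and "subfield K R"
    and "n = ring.dim R K (carrier R)"
    and "is_flag R K F"
    and "is_flag_best_friend R K L F"
    and "m = ring.dim R K L"
    and "length s = length F"
    and "\<forall>i < length F. ring.dim R K (F ! i) = m * s ! i"
    and "\<beta> \<in> carrier R - {\<zero>\<^bsub>R\<^esub>}" and "\<beta> \<notin> L"
    and "min_flag_dist R K (flag_orbit R F \<beta>) = 2 * m"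
  shows "card {j \<in> {1..length F}. gcd (s ! (j - 1)) (n div m) \<noteq> 1} \<ge> length F - 1"
proof -
  interpret field R by fact
  have L: "subfield L R" "K \<subseteq> L" and FL: "\<forall>U \<in> set F. subalgebra L U R"
    using assms(5,6) unfolding is_flag_best_friend_def is_flag_friend_def is_friend_def is_flag_def
    by (auto simp: subalgebra_def subalgebra_axioms_def in_set_conv_nth)
  have "0 < min_flag_dist R K (flag_orbit R F \<beta>)"
    using dim_subfield_pos[OF assms(3) L assms(2)] assms(7,12) by simp
  moreover have "finite (flag_orbit R F \<beta>)" using finite_flag_orbit[OF assms(2)] assms(10) by simp
  ultimately obtain X Y where XY: "X \<in> flag_orbit R F \<beta>" "Y \<in> flag_orbit R F \<beta>" "X \<noteq> Y"
      "flag_dist R K X Y = 2 * m"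
    using min_flag_dist_attained assms(12) by (metis (no_types, lifting))
  then obtain a b :: nat
    where ab: "X = flag_mult R F (\<beta> [^]\<^bsub>R\<^esub> a)" "Y = flag_mult R F (\<beta> [^]\<^bsub>R\<^esub> b)"
    unfolding flag_orbit_def by auto
  have "flag_dist R K X Y = 2 * dim K L" using XY(4) assms(7) by simp
  then obtain i where i: "\<And>k. k < length F \<Longrightarrow> k \<noteq> i \<Longrightarrow> X ! k = Y ! k"
    using orbit_codewords_at_distance_differ_in_one_component[OF assms(2,3) L FL assms(10)]
    unfolding ab by blast
  have "gcd (s ! k) (n div m) \<noteq> 1" if "k < length F" and "k \<noteq> i" for k
    using gcd_ne_one_if_orbit_component_eq[OF assms(2,3) L FL assms(10) XY(3)[unfolded ab] that(1)
        i[OF that, unfolded ab]] assms(4,7,9) that(1) by simp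
  thus ?thesis by (rule card_all_but_one_index)
qed

end
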